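(* Let $\mathbf{z}=(\mathbf{x},y)$ and $\mathbf{z}'=(\mathbf{x}',y')$ be drawn independently from a distribution $\mathbb{P}$ on $\mathcal{X}\times\{-1,+1\}$, let $p=\Pr(y=1)\in(0,1)$, and let $h(\mathbf{w};\mathbf{x})$ be a scoring function parameterized by $\mathbf{w}\in\mathbb{R}^d$ with $0\le h(\mathbf{w};\mathbf{x})\le 1$. Define $$P(\mathbf{w})=\mathbb{E}_{\mathbf{z},\mathbf{z}'}\left[(1-h(\mathbf{w};\mathbf{x})+h(\mathbf{w};\mathbf{x}'))^2\,\middle\vert\, y=1,y'=-1\right]$$ and, for $\mathbf{w}\in\mathbb{R}^d$, $a,b,\alpha\in\mathbb{R}$, $$F(\mathbf{w},a,b,\alpha;\mathbf{z})=(1-p)(h(\mathbf{w};\mathbf{x})-a)^2\mathbb{I}_{[y=1]}+p(h(\mathbf{w};\mathbf{x})-b)^2\mathbb{I}_{[y=-1]}+2(1+\alpha)\big(p\,h(\mathbf{w};\mathbf{x})\mathbb{I}_{[y=-1]}-(1-p)h(\mathbf{w};\mathbf{x})\mathbb{I}_{[y=1]}\big)-p(1-p)\alpha^2,$$ $f(\mathbf{w},a,b,\alpha)=\mathbb{E}_{\mathbf{z}}[F(\mathbf{w},a,b,\alpha;\mathbf{z})]$. Then the problem $\min_{\mathbf{w}\in\mathbb{R}^d}P(\mathbf{w})$ is equivalent to the saddle-point problem $\min_{\mathbf{w}\in\mathbb{R}^d,(a,b)\in\mathbb{R}^2}\max_{\alpha\in\mathbb{R}} f(\mathbf{w},a,b,\alpha)$,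 in the sense that for every $\mathbf{w}\in\mathbb{R}^d$, $$P(\mathbf{w})=1+\frac{1}{p(1-p)}\min_{(a,b)\in\mathbb{R}^2}\max_{\alpha\in\mathbb{R}}f(\mathbf{w},a,b,\alpha).$$
   Context: $\mathbb{I}_{[\cdot]}$ denotes the indicator function. The expectation conditioned on $y=1,y'=-1$ is over the independent pair $(\mathbf{z},\mathbf{z}')$. *)

theory Defs
  imports "HOL-Probability.Probability"
begin

definition ind :: "bool \<Rightarrow> real" where
  "ind b = (if b then 1 else 0)"

definition pos_prob :: "('x \<times> real) measure \<Rightarrow> real" where
  "pos_prob M = measure M {z \<in> space M. snd z = 1}"

text \<open>P(w): conditional expectation over the independent pair (z, z') drawn from M \<otimes> M,
  conditioned on the event y = 1, y' = -1 (elementary conditional expectation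
  E[X 1_A] / Pr(A), with Pr(A) = p (1-p)).\<close>
definition P_obj :: "('x \<times> real) measure \<Rightarrow> ('w \<Rightarrow> 'x \<Rightarrow> real) \<Rightarrow> 'w \<Rightarrow> real" where
  "P_obj M h w =
     (\<integral>zz. (1 - h w (fst (fst zz)) + h w (fst (snd zz)))\<^sup>2
            * ind (snd (fst zz) = 1) * ind (snd (snd zz) = -1) \<partial>(M \<Otimes>\<^sub>M M))
     / measure (M \<Otimes>\<^sub>M M) {zz \<in> space (M \<Otimes>\<^sub>M M). snd (fst zz) = 1 \<and> snd (snd zz) = -1}"

definition F_obj :: "real \<Rightarrow> ('w \<Rightarrow> 'x \<Rightarrow> real) \<Rightarrow> 'w \<Rightarrow> real \<Rightarrow> real \<Rightarrow> real \<Rightarrow> 'x \<times> real \<Rightarrow> real" where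
  "F_obj p h w a b \<alpha> z =
     (1 - p) * (h w (fst z) - a)\<^sup>2 * ind (snd z = 1)
     + p * (h w (fst z) - b)\<^sup>2 * ind (snd z = -1)
     + 2 * (1 + \<alpha>) * (p * h w (fst z) * ind (snd z = -1) - (1 - p) * h w (fst z) * ind (snd z = 1))
     - p * (1 - p) * \<alpha>\<^sup>2"

definition f_obj :: "('x \<times> real) measure \<Rightarrow> ('w \<Rightarrow> 'x \<Rightarrow> real) \<Rightarrow> 'w \<Rightarrow> real \<Rightarrow> real \<Rightarrow> real \<Rightarrow> real" where
  "f_obj M h w a b \<alpha> = (\<integral>z. F_obj (pos_prob M) h w a b \<alpha> z \<partial>M)"

definition is_max_of :: "real set \<Rightarrow> real \<Rightarrow> bool" where
  "is_max_of S v \<longleftrightarrow> v \<in> S \<and> (\<forall>u\<in>S. u \<le> v)"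

definition is_min_of :: "real set \<Rightarrow> real \<Rightarrow> bool" where
  "is_min_of S v \<longleftrightarrow> v \<in> S \<and> (\<forall>u\<in>S. v \<le> u)"

end

theory Submission
  imports Defs
begin

(* Expanding the squares, f(w,a,b,\<alpha>) is a quadratic polynomial in a, b, \<alpha> whose coefficients
   are the class moments E[h\<^sup>k 1[y = c]]; by Fubini the pair expectation defining P(w) factorises
   into the same moments. Completing squares with the class-conditional means \<mu>\<^sub>1 = E[h | y = 1],
   \<mu>\<^sub>2 = E[h | y = -1] gives
   f = p(1-p) ((a - \<mu>\<^sub>1)\<^sup>2 + (b - \<mu>\<^sub>2)\<^sup>2 + P(w) - 1 - (\<alpha> - (\<mu>\<^sub>2 - \<mu>\<^sub>1))\<^sup>2),
   so maximising over \<alpha> and then minimising over (a, b) leaves exactly p(1-p) (P(w) - 1). *)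

lemma (in pair_sigma_finite) integrable_times_fst_snd:
  fixes u :: "'a \<Rightarrow> real" and v :: "'b \<Rightarrow> real"
  assumes u: "integrable M1 u" and v: "integrable M2 v"
  shows "integrable (M1 \<Otimes>\<^sub>M M2) (\<lambda>z. u (fst z) * v (snd z))"
proof (subst integrable_iff_bounded, intro conjI)
  have [measurable]: "u \<in> borel_measurable M1" "v \<in> borel_measurable M2"
    using u v by auto
  show "(\<lambda>z. u (fst z) * v (snd z)) \<in> borel_measurable (M1 \<Otimes>\<^sub>M M2)"
    by measurable
  have "(\<integral>\<^sup>+z. ennreal (norm (u (fst z) * v (snd z))) \<partial>(M1 \<Otimes>\<^sub>M M2))
      = (\<integral>\<^sup>+x. \<integral>\<^sup>+y. ennreal (norm (u x * v y)) \<partial>M2 \<partial>M1)"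
    by (subst M2.nn_integral_fst[symmetric]) auto
  also have "\<dots> = (\<integral>\<^sup>+x. \<integral>\<^sup>+y. ennreal (norm (u x)) * ennreal (norm (v y)) \<partial>M2 \<partial>M1)"
    by (simp add: abs_mult ennreal_mult)
  also have "\<dots> = (\<integral>\<^sup>+x. ennreal (norm (u x)) \<partial>M1) * (\<integral>\<^sup>+y. ennreal (norm (v y)) \<partial>M2)"
    by (simp add: nn_integral_cmult nn_integral_multc)
  also have "\<dots> < \<infinity>"
    using u v by (simp add: integrable_iff_bounded ennreal_mult_less_top)
  finally show "(\<integral>\<^sup>+z. ennreal (norm (u (fst z) * v (snd z))) \<partial>(M1 \<Otimes>\<^sub>M M2)) < \<infinity>" .
qed

lemma (in pair_sigma_finite) integral_times_fst_snd:
  fixes u :: "'a \<Rightarrow> real" and v :: "'b \<Rightarrow> real"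
  assumes u: "integrable M1 u" and v: "integrable M2 v"
  shows "(\<integral>z. u (fst z) * v (snd z) \<partial>(M1 \<Otimes>\<^sub>M M2)) = integral\<^sup>L M1 u * integral\<^sup>L M2 v"
  using integral_fst'[OF integrable_times_fst_snd[OF u v]] by simp

lemma is_max_of_imp_Sup_eq:
  assumes "is_max_of S v"
  shows "Sup S = v"
  using assms unfolding is_max_of_def by (intro cSup_eq_maximum) auto

lemma saddle_point_separable_quadratic:
  fixes f :: "real \<Rightarrow> real \<Rightarrow> real \<Rightarrow> real"
  assumes "0 < k"
    and f: "\<And>a b \<alpha>. f a b \<alpha> = k * ((a - m\<^sub>1)\<^sup>2 + (b - m\<^sub>2)\<^sup>2 + c - (\<alpha> - r)\<^sup>2)"
  shows "is_max_of (range (f a b)) (k * ((a - m\<^sub>1)\<^sup>2 + (b - m\<^sub>2)\<^sup>2 + c))"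
    and "is_min_of ((\<lambda>(a, b). Sup (range (f a b))) ` UNIV) (k * c)"
proof -
  show max: "is_max_of (range (f a b)) (k * ((a - m\<^sub>1)\<^sup>2 + (b - m\<^sub>2)\<^sup>2 + c))" for a b
    unfolding is_max_of_def
  proof
    show "k * ((a - m\<^sub>1)\<^sup>2 + (b - m\<^sub>2)\<^sup>2 + c) \<in> range (f a b)"
      by (rule range_eqI[of _ _ r]) (simp add: f)
    show "\<forall>u\<in>range (f a b). u \<le> k * ((a - m\<^sub>1)\<^sup>2 + (b - m\<^sub>2)\<^sup>2 + c)"
      using \<open>0 < k\<close> by (auto simp: f algebra_simps)
  qed
  have "Sup (range (f a b)) = k * ((a - m\<^sub>1)\<^sup>2 + (b - m\<^sub>2)\<^sup>2 + c)" for a b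
    using max by (rule is_max_of_imp_Sup_eq)
  then show "is_min_of ((\<lambda>(a, b). Sup (range (f a b))) ` UNIV) (k * c)"
    using \<open>0 < k\<close> unfolding is_min_of_def
    by (auto simp: image_iff intro!: exI[of _ m\<^sub>1] exI[of _ m\<^sub>2] mult_left_mono)
qed

locale scored_labelled_sample = prob_space M
  for M :: "('x \<times> real) measure" and h :: "'w \<Rightarrow> 'x \<Rightarrow> real" +
  assumes AE_label: "AE z in M. snd z \<in> {-1, 1}"
    and measurable_label [measurable]: "snd \<in> borel_measurable M"
    and measurable_score [measurable]: "\<And>w. (\<lambda>z. h w (fst z)) \<in> borel_measurable M"
    and score_bounded: "\<And>w x. 0 \<le> h w x \<and> h w x \<le> 1"
begin

definition class_moment :: "'w \<Rightarrow> nat \<Rightarrow> real \<Rightarrow> real" where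
  "class_moment w k c = (\<integral>z. h w (fst z) ^ k * ind (snd z = c) \<partial>M)"

lemma integrable_score_power_ind:
  "integrable M (\<lambda>z. h w (fst z) ^ k * ind (snd z = c))"
proof (rule integrable_const_bound[where B = 1])
  show "AE z in M. norm (h w (fst z) ^ k * ind (snd z = c)) \<le> 1"
    using score_bounded by (auto simp: ind_def abs_mult intro!: power_le_one)
qed (simp add: ind_def)

lemmas integrable_class_moment_integrands =
  integrable_score_power_ind[of _ 0, simplified]
  integrable_score_power_ind[of _ 1, simplified]
  integrable_score_power_ind[of _ 2]

lemma integral_ind_pos: "(\<integral>z. ind (snd z = 1) \<partial>M) = pos_prob M"
proof -
  have "(\<integral>z. ind (snd z = 1) \<partial>M) = (\<integral>z. indicator {z \<in> space M. snd z = 1} z \<partial>M)"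
    by (intro Bochner_Integration.integral_cong) (auto simp: ind_def)
  then show ?thesis
    unfolding pos_prob_def by simp
qed

lemma integral_ind_neg: "(\<integral>z. ind (snd z = -1) \<partial>M) = 1 - pos_prob M"
proof -
  have "(\<integral>z. ind (snd z = -1) \<partial>M) = (\<integral>z. 1 - ind (snd z = 1) \<partial>M)"
    by (intro integral_cong_AE) (use AE_label in \<open>auto simp: ind_def\<close>)
  then show ?thesis
    using integrable_class_moment_integrands by (simp add: integral_ind_pos prob_space)
qed

lemma f_obj_eq_class_moments:
  defines "p \<equiv> pos_prob M"
  shows "f_obj M h w a b \<alpha> =
      (1 - p) * (class_moment w 2 1 - 2 * a * class_moment w 1 1 + a\<^sup>2 * p)
    + p * (class_moment w 2 (-1) - 2 * b * class_moment w 1 (-1) + b\<^sup>2 * (1 - p))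
    + 2 * (1 + \<alpha>) * (p * class_moment w 1 (-1) - (1 - p) * class_moment w 1 1)
    - p * (1 - p) * \<alpha>\<^sup>2"
proof -
  have "f_obj M h w a b \<alpha> = (\<integral>z.
        (1 - p) * ((h w (fst z))\<^sup>2 * ind (snd z = 1)) - (2 * a * (1 - p)) * (h w (fst z) * ind (snd z = 1))
      + ((1 - p) * a\<^sup>2) * ind (snd z = 1)
      + p * ((h w (fst z))\<^sup>2 * ind (snd z = -1)) - (2 * b * p) * (h w (fst z) * ind (snd z = -1))
      + (p * b\<^sup>2) * ind (snd z = -1)
      + (2 * (1 + \<alpha>) * p) * (h w (fst z) * ind (snd z = -1))
      - (2 * (1 + \<alpha>) * (1 - p)) * (h w (fst z) * ind (snd z = 1))
      - p * (1 - p) * \<alpha>\<^sup>2 \<partial>M)"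
    unfolding f_obj_def p_def
    by (intro Bochner_Integration.integral_cong) (auto simp: F_obj_def power2_eq_square algebra_simps)
  then show ?thesis
    using integrable_class_moment_integrands
    by (simp add: class_moment_def integral_ind_pos integral_ind_neg p_def prob_space algebra_simps)
qed

lemma measure_pos_neg_pairs:
  "measure (M \<Otimes>\<^sub>M M) {zz \<in> space (M \<Otimes>\<^sub>M M). snd (fst zz) = 1 \<and> snd (snd zz) = -1}
    = pos_prob M * (1 - pos_prob M)"
proof -
  interpret MM: pair_prob_space M M ..
  have "measure (M \<Otimes>\<^sub>M M) {zz \<in> space (M \<Otimes>\<^sub>M M). snd (fst zz) = 1 \<and> snd (snd zz) = -1}
      = (\<integral>zz. indicator {zz \<in> space (M \<Otimes>\<^sub>M M). snd (fst zz) = 1 \<and> snd (snd zz) = -1} zz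
          \<partial>(M \<Otimes>\<^sub>M M))"
    by (simp add: Int_absorb2 subset_eq)
  also have "\<dots> = (\<integral>zz. ind (snd (fst zz) = 1) * ind (snd (snd zz) = -1) \<partial>(M \<Otimes>\<^sub>M M))"
    by (intro Bochner_Integration.integral_cong) (auto simp: ind_def)
  also have "\<dots> = pos_prob M * (1 - pos_prob M)"
    using MM.integral_times_fst_snd[of "\<lambda>z. ind (snd z = 1)" "\<lambda>z. ind (snd z = -1)"]
    by (simp add: integrable_class_moment_integrands integral_ind_pos integral_ind_neg)
  finally show ?thesis .
qed

lemma integral_pos_neg_pair_loss:
  defines "p \<equiv> pos_prob M"
  shows "(\<integral>zz. (1 - h w (fst (fst zz)) + h w (fst (snd zz)))\<^sup>2
            * ind (snd (fst zz) = 1) * ind (snd (snd zz) = -1) \<partial>(M \<Otimes>\<^sub>M M))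
    = (p - 2 * class_moment w 1 1 + class_moment w 2 1) * (1 - p)
      + 2 * (p - class_moment w 1 1) * class_moment w 1 (-1) + p * class_moment w 2 (-1)"
proof -
  interpret MM: pair_prob_space M M ..
  define s where "s z = h w (fst z)" for z :: "'x \<times> real"
  define I where "I c z = ind (snd z = c)" for c and z :: "'x \<times> real"
  define u\<^sub>0 where "u\<^sub>0 x = (1 - s x)\<^sup>2 * I 1 x" for x
  define u\<^sub>1 where "u\<^sub>1 x = 2 * (1 - s x) * I 1 x" for x
  define v\<^sub>1 where "v\<^sub>1 y = s y * I (-1) y" for y
  define v\<^sub>2 where "v\<^sub>2 y = (s y)\<^sup>2 * I (-1) y" for y
  have int_I: "integrable M (I c)" and int_sI: "integrable M (\<lambda>z. s z * I c z)"
    and int_ssI: "integrable M (\<lambda>z. (s z)\<^sup>2 * I c z)" for c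
    using integrable_class_moment_integrands unfolding s_def I_def by auto
  have integral_I: "integral\<^sup>L M (I 1) = p" "integral\<^sup>L M (I (-1)) = 1 - p"
    using integral_ind_pos integral_ind_neg unfolding I_def p_def by auto
  have integral_sI: "(\<integral>z. s z * I c z \<partial>M) = class_moment w 1 c"
    and integral_ssI: "(\<integral>z. (s z)\<^sup>2 * I c z \<partial>M) = class_moment w 2 c" for c
    by (simp_all add: class_moment_def s_def I_def)
  have u\<^sub>0_expand: "u\<^sub>0 = (\<lambda>x. I 1 x - 2 * (s x * I 1 x) + (s x)\<^sup>2 * I 1 x)"
    and u\<^sub>1_expand: "u\<^sub>1 = (\<lambda>x. 2 * I 1 x - 2 * (s x * I 1 x))"
    by (auto simp: u\<^sub>0_def u\<^sub>1_def power2_eq_square algebra_simps)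
  have int_u: "integrable M u\<^sub>0" "integrable M u\<^sub>1"
    and integral_u: "integral\<^sup>L M u\<^sub>0 = p - 2 * class_moment w 1 1 + class_moment w 2 1"
      "integral\<^sup>L M u\<^sub>1 = 2 * (p - class_moment w 1 1)"
    using int_I int_sI int_ssI
    by (simp_all add: u\<^sub>0_expand u\<^sub>1_expand integral_I integral_sI integral_ssI)
  have int_v: "integrable M v\<^sub>1" "integrable M v\<^sub>2"
    and integral_v: "integral\<^sup>L M v\<^sub>1 = class_moment w 1 (-1)" "integral\<^sup>L M v\<^sub>2 = class_moment w 2 (-1)"
    using int_sI int_ssI by (simp_all add: v\<^sub>1_def[abs_def] v\<^sub>2_def[abs_def] integral_sI integral_ssI)
  have "(\<integral>zz. (1 - h w (fst (fst zz)) + h w (fst (snd zz)))\<^sup>2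
            * ind (snd (fst zz) = 1) * ind (snd (snd zz) = -1) \<partial>(M \<Otimes>\<^sub>M M))
    = (\<integral>zz. u\<^sub>0 (fst zz) * I (-1) (snd zz) + u\<^sub>1 (fst zz) * v\<^sub>1 (snd zz) + I 1 (fst zz) * v\<^sub>2 (snd zz)
        \<partial>(M \<Otimes>\<^sub>M M))"
    by (intro Bochner_Integration.integral_cong)
      (auto simp: s_def I_def u\<^sub>0_def u\<^sub>1_def v\<^sub>1_def v\<^sub>2_def power2_eq_square algebra_simps)
  also have "\<dots> = integral\<^sup>L M u\<^sub>0 * integral\<^sup>L M (I (-1)) + integral\<^sup>L M u\<^sub>1 * integral\<^sup>L M v\<^sub>1
      + integral\<^sup>L M (I 1) * integral\<^sup>L M v\<^sub>2"
    using int_I int_u int_v by (simp add: MM.integrable_times_fst_snd MM.integral_times_fst_snd)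
  finally show ?thesis
    unfolding integral_I integral_u integral_v .
qed

lemma P_obj_eq_class_moments:
  defines "p \<equiv> pos_prob M"
  shows "P_obj M h w =
      ((p - 2 * class_moment w 1 1 + class_moment w 2 1) * (1 - p)
       + 2 * (p - class_moment w 1 1) * class_moment w 1 (-1) + p * class_moment w 2 (-1))
      / (p * (1 - p))"
  unfolding P_obj_def integral_pos_neg_pair_loss measure_pos_neg_pairs p_def ..

lemma f_obj_completed_square:
  fixes w :: 'w
  assumes "0 < pos_prob M" and "pos_prob M < 1"
  defines "p \<equiv> pos_prob M"
    and "\<mu>\<^sub>1 \<equiv> class_moment w 1 1 / pos_prob M"
    and "\<mu>\<^sub>2 \<equiv> class_moment w 1 (-1) / (1 - pos_prob M)"
  shows "f_obj M h w a b \<alpha> =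
    p * (1 - p) * ((a - \<mu>\<^sub>1)\<^sup>2 + (b - \<mu>\<^sub>2)\<^sup>2 + (P_obj M h w - 1) - (\<alpha> - (\<mu>\<^sub>2 - \<mu>\<^sub>1))\<^sup>2)"
proof -
  have "p \<noteq> 0" "1 - p \<noteq> 0"
    using assms(1,2) unfolding p_def by auto
  then have first_moments: "class_moment w 1 1 = p * \<mu>\<^sub>1" "class_moment w 1 (-1) = (1 - p) * \<mu>\<^sub>2"
    unfolding \<mu>\<^sub>1_def \<mu>\<^sub>2_def p_def by simp_all
  have "p * (1 - p) * P_obj M h w = (p - 2 * class_moment w 1 1 + class_moment w 2 1) * (1 - p)
      + 2 * (p - class_moment w 1 1) * class_moment w 1 (-1) + p * class_moment w 2 (-1)"
    using \<open>p \<noteq> 0\<close> \<open>1 - p \<noteq> 0\<close> unfolding P_obj_eq_class_moments p_def by simp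
  then have P_minus_1: "p * (1 - p) * (P_obj M h w - 1) = (1 - p) * class_moment w 2 1
      + p * class_moment w 2 (-1) + p * (1 - p) * (2 * (\<mu>\<^sub>2 - \<mu>\<^sub>1) - 2 * \<mu>\<^sub>1 * \<mu>\<^sub>2)"
    unfolding first_moments right_diff_distrib mult_1_right by (simp add: algebra_simps)
  have "p * (1 - p) * ((a - \<mu>\<^sub>1)\<^sup>2 + (b - \<mu>\<^sub>2)\<^sup>2 + (P_obj M h w - 1) - (\<alpha> - (\<mu>\<^sub>2 - \<mu>\<^sub>1))\<^sup>2)
      = p * (1 - p) * ((a - \<mu>\<^sub>1)\<^sup>2 + (b - \<mu>\<^sub>2)\<^sup>2 - (\<alpha> - (\<mu>\<^sub>2 - \<mu>\<^sub>1))\<^sup>2)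
        + p * (1 - p) * (P_obj M h w - 1)"
    by (simp add: algebra_simps)
  also have "\<dots> = f_obj M h w a b \<alpha>"
    unfolding P_minus_1 f_obj_eq_class_moments first_moments p_def[symmetric]
    by (simp add: power2_eq_square algebra_simps)
  finally show ?thesis ..
qed

end

theorem proposition1:
  fixes M :: "('x \<times> real) measure"
    and h :: "real ^ 'd \<Rightarrow> 'x \<Rightarrow> real"
  assumes "prob_space M"
    and "AE z in M. snd z \<in> {-1, 1}"
    and "snd \<in> borel_measurable M"
    and "\<And>w. (\<lambda>z. h w (fst z)) \<in> borel_measurable M"
    and "0 < pos_prob M" and "pos_prob M < 1"
    and "\<And>w x. 0 \<le> h w x \<and> h w x \<le> 1"
  shows "\<forall>w. (\<forall>a b. \<exists>v. is_max_of (range (f_obj M h w a b)) v)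
           \<and> (\<exists>v. is_min_of ((\<lambda>(a, b). Sup (range (f_obj M h w a b))) ` UNIV) v
                  \<and> P_obj M h w = 1 + v / (pos_prob M * (1 - pos_prob M)))"
proof
  fix w
  interpret scored_labelled_sample M h
    using assms(1-4,7) by (simp add: scored_labelled_sample_def scored_labelled_sample_axioms_def)
  have "0 < pos_prob M * (1 - pos_prob M)"
    using assms(5,6) by simp
  note saddle = saddle_point_separable_quadratic[where f = "f_obj M h w",
      OF this f_obj_completed_square[OF assms(5,6)]]
  have "P_obj M h w = 1 + pos_prob M * (1 - pos_prob M) * (P_obj M h w - 1) / (pos_prob M * (1 - pos_prob M))"
    using assms(5,6) by simp
  then show "(\<forall>a b. \<exists>v. is_max_of (range (f_obj M h w a b)) v)
           \<and> (\<exists>v. is_min_of ((\<lambda>(a, b). Sup (range (f_obj M h w a b))) ` UNIV) v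
                  \<and> P_obj M h w = 1 + v / (pos_prob M * (1 - pos_prob M)))"
    using saddle by blast
qed

end
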